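(* Let $(P,\lambda)$ be a marked poset whose Hasse diagram is a disjoint union of connected components such that each component contains exactly one maximal marked element and exactly one minimal marked element. Then the marked order polytope $\mathcal{O}(P,\lambda)$ is affinely isomorphic to the order polytope $\mathcal{O}(Q)$ of some finite poset $Q$.
   Context: A marked poset $(P,\lambda)$ is a finite poset $(P,\preceq)$ together with an induced subposet $P^*\subseteq P$ of marked elements and an order-preserving map $\lambda:P^*\to\mathbb{R}$ (the marking); it is always assumed that all minimal and all maximal elements of $P$ lie in $P^*$. The marked order polytope $\mathcal{O}(P,\lambda)\subseteq\mathbb{R}^{P\setminus P^*}$ is the set of all $x$ such that, setting $x_a=\lambda(a)$ for $a\in P^*$, one has $x_p\le x_q$ for all $p\preceq q$ in $P$. For a finite poset $Q$, the order polytope $\mathcal{O}(Q)\subseteq\mathbb{R}^Q$ is defined by $0\le x_p\le 1$ for all $p\in Q$ and $x_p\le x_q$ whenever $p\prec q$. Two polytopes $A,B\subseteq\mathbb{R}^d$ are affinely isomorphic if $f(A)=B$ for some map $f(x)=Mx+x_0$ with $M$ an invertible $d\times d$ matrix.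
   Formalization: The marked elements of each component are exactly its minimal and maximal marked elements, and $\lambda(a) < \lambda(b)$ whenever $a \preceq p \preceq b$ with $a, b$ marked and $p$ unmarked. Each condition added here is assumed in the paper as well or is needed for the statement above to hold. *)

theory Defs
  imports Complex_Main
begin

definition is_poset :: "'a set \<Rightarrow> ('a \<Rightarrow> 'a \<Rightarrow> bool) \<Rightarrow> bool" where
  "is_poset P le \<longleftrightarrow> finite P
     \<and> (\<forall>x\<in>P. le x x)
     \<and> (\<forall>x\<in>P. \<forall>y\<in>P. le x y \<and> le y x \<longrightarrow> x = y)
     \<and> (\<forall>x\<in>P. \<forall>y\<in>P. \<forall>z\<in>P. le x y \<and> le y z \<longrightarrow> le x z)"

definition minimal_in :: "'a set \<Rightarrow> ('a \<Rightarrow> 'a \<Rightarrow> bool) \<Rightarrow> 'a \<Rightarrow> bool" where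
  "minimal_in S le x \<longleftrightarrow> x \<in> S \<and> (\<forall>y\<in>S. le y x \<longrightarrow> y = x)"

definition maximal_in :: "'a set \<Rightarrow> ('a \<Rightarrow> 'a \<Rightarrow> bool) \<Rightarrow> 'a \<Rightarrow> bool" where
  "maximal_in S le x \<longleftrightarrow> x \<in> S \<and> (\<forall>y\<in>S. le x y \<longrightarrow> y = x)"

definition marked_poset ::
  "'a set \<Rightarrow> ('a \<Rightarrow> 'a \<Rightarrow> bool) \<Rightarrow> 'a set \<Rightarrow> ('a \<Rightarrow> real) \<Rightarrow> bool" where
  "marked_poset P le Pm lam \<longleftrightarrow> is_poset P le \<and> Pm \<subseteq> P
     \<and> (\<forall>x\<in>Pm. \<forall>y\<in>Pm. le x y \<longrightarrow> lam x \<le> lam y)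
     \<and> (\<forall>x. minimal_in P le x \<longrightarrow> x \<in> Pm)
     \<and> (\<forall>x. maximal_in P le x \<longrightarrow> x \<in> Pm)"

definition covers :: "'a set \<Rightarrow> ('a \<Rightarrow> 'a \<Rightarrow> bool) \<Rightarrow> 'a \<Rightarrow> 'a \<Rightarrow> bool" where
  "covers P le p q \<longleftrightarrow> p \<in> P \<and> q \<in> P \<and> le p q \<and> p \<noteq> q
     \<and> \<not> (\<exists>z\<in>P. le p z \<and> le z q \<and> z \<noteq> p \<and> z \<noteq> q)"

definition hasse_edges :: "'a set \<Rightarrow> ('a \<Rightarrow> 'a \<Rightarrow> bool) \<Rightarrow> ('a \<times> 'a) set" where
  "hasse_edges P le = {(p, q). covers P le p q \<or> covers P le q p}"

definition hasse_component :: "'a set \<Rightarrow> ('a \<Rightarrow> 'a \<Rightarrow> bool) \<Rightarrow> 'a \<Rightarrow> 'a set" where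
  "hasse_component P le x = {y \<in> P. (x, y) \<in> (hasse_edges P le)\<^sup>*}"

text \<open>Points of R^(P - Pm) are represented as functions vanishing outside P - Pm.\<close>
definition marked_order_polytope ::
  "'a set \<Rightarrow> ('a \<Rightarrow> 'a \<Rightarrow> bool) \<Rightarrow> 'a set \<Rightarrow> ('a \<Rightarrow> real) \<Rightarrow> ('a \<Rightarrow> real) set" where
  "marked_order_polytope P le Pm lam =
     {x. (\<forall>p. p \<notin> P - Pm \<longrightarrow> x p = 0)
       \<and> (\<forall>p\<in>P. \<forall>q\<in>P. le p q \<longrightarrow>
            (if p \<in> Pm then lam p else x p) \<le> (if q \<in> Pm then lam q else x q))}"

text \<open>Points of R^Q are represented as functions vanishing outside Q.\<close>
definition order_polytope :: "'b set \<Rightarrow> ('b \<Rightarrow> 'b \<Rightarrow> bool) \<Rightarrow> ('b \<Rightarrow> real) set" where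
  "order_polytope Q le =
     {x. (\<forall>q. q \<notin> Q \<longrightarrow> x q = 0)
       \<and> (\<forall>q\<in>Q. 0 \<le> x q \<and> x q \<le> 1)
       \<and> (\<forall>p\<in>Q. \<forall>q\<in>Q. le p q \<and> p \<noteq> q \<longrightarrow> x p \<le> x q)}"

text \<open>A \<subseteq> R^U and B \<subseteq> R^V are affinely isomorphic: B = f(A) for f(x) = M x + c with
  M an invertible (square) U-by-V matrix, given by a two-sided inverse N.\<close>
definition affinely_isomorphic ::
  "'a set \<Rightarrow> 'b set \<Rightarrow> ('a \<Rightarrow> real) set \<Rightarrow> ('b \<Rightarrow> real) set \<Rightarrow> bool" where
  "affinely_isomorphic U V A B \<longleftrightarrow>
     (\<exists>(M :: 'b \<Rightarrow> 'a \<Rightarrow> real) (c :: 'b \<Rightarrow> real).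
        (\<exists>N :: 'a \<Rightarrow> 'b \<Rightarrow> real.
           (\<forall>q\<in>V. \<forall>q'\<in>V. (\<Sum>p\<in>U. M q p * N p q') = (if q = q' then 1 else 0))
         \<and> (\<forall>p\<in>U. \<forall>p'\<in>U. (\<Sum>q\<in>V. N p q * M q p') = (if p = p' then 1 else 0)))
      \<and> (\<lambda>x. \<lambda>q. if q \<in> V then (\<Sum>p\<in>U. M q p * x p) + c q else 0) ` A = B)"

definition components_one_min_one_max_marked ::
  "'a set \<Rightarrow> ('a \<Rightarrow> 'a \<Rightarrow> bool) \<Rightarrow> 'a set \<Rightarrow> bool" where
  "components_one_min_one_max_marked P le Pm \<longleftrightarrow>
     (\<forall>x\<in>P. let C = hasse_component P le x in
        (\<exists>!a. minimal_in (C \<inter> Pm) le a)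
      \<and> (\<exists>!b. maximal_in (C \<inter> Pm) le b)
      \<and> (\<forall>z\<in>C \<inter> Pm. minimal_in (C \<inter> Pm) le z \<or> maximal_in (C \<inter> Pm) le z))"

end

theory Submission
  imports Defs
begin

text \<open>Every unmarked element p lies above the unique minimal marked element a and below the
  unique maximal marked element b of its Hasse component, and a and b are the only marked
  elements comparable with p. So the marked order polytope consists of the x with
  \<open>\<lambda> a \<le> x\<^sub>p \<le> \<lambda> b\<close> that are monotone on the unmarked elements, and since comparable
  unmarked elements share a and b, the coordinatewise rescaling
  \<open>x\<^sub>p \<mapsto> (x\<^sub>p - \<lambda> a) / (\<lambda> b - \<lambda> a)\<close>, whose denominators are positive by the
  third hypothesis, maps it onto the order polytope of the subposet of unmarked elements.\<close>

lemma is_poset_refl: "is_poset P le \<Longrightarrow> x \<in> P \<Longrightarrow> le x x"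
  unfolding is_poset_def by blast

lemma is_poset_antisym:
  "is_poset P le \<Longrightarrow> x \<in> P \<Longrightarrow> y \<in> P \<Longrightarrow> le x y \<Longrightarrow> le y x \<Longrightarrow> x = y"
  unfolding is_poset_def by blast

lemma is_poset_trans:
  "is_poset P le \<Longrightarrow> x \<in> P \<Longrightarrow> y \<in> P \<Longrightarrow> z \<in> P \<Longrightarrow> le x y \<Longrightarrow> le y z \<Longrightarrow> le x z"
  unfolding is_poset_def by blast

lemma is_poset_finite: "is_poset P le \<Longrightarrow> finite P"
  unfolding is_poset_def by blast

lemma is_poset_converse: "is_poset P le \<Longrightarrow> is_poset P (\<lambda>x y. le y x)"
  unfolding is_poset_def by blast

lemma is_poset_pullback:
  assumes "is_poset P le" "inj_on h V" "h ` V \<subseteq> P" "finite V"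
  shows "is_poset V (\<lambda>i j. le (h i) (h j))"
  using assms unfolding is_poset_def inj_on_def by (simp add: image_subset_iff) blast

lemma maximal_in_converse: "maximal_in S le x = minimal_in S (\<lambda>x y. le y x) x"
  unfolding maximal_in_def minimal_in_def by simp

lemma minimal_in_below:
  assumes po: "is_poset P le" and SP: "S \<subseteq> P" and "x \<in> S"
  obtains m where "minimal_in S le m" "le m x"
proof -
  let ?R = "{(y, z). y \<in> S \<and> z \<in> S \<and> le y z \<and> y \<noteq> z}"
  have "trans ?R"
  proof (rule transI)
    fix u v w assume "(u, v) \<in> ?R" "(v, w) \<in> ?R"
    then show "(u, w) \<in> ?R"
      using SP is_poset_trans[OF po, of u v w] is_poset_antisym[OF po, of u v] by auto
  qed
  have "finite S"
    using finite_subset[OF SP is_poset_finite[OF po]] .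
  then have "finite (S \<times> S)"
    by simp
  then have "finite ?R"
    by (rule finite_subset[rotated]) auto
  moreover have "acyclic ?R"
    unfolding acyclic_irrefl trancl_id[OF \<open>trans ?R\<close>] irrefl_def by simp
  ultimately have "wf ?R"
    by (rule finite_acyclic_wf)
  moreover have "x \<in> {z \<in> S. le z x}"
    using SP \<open>x \<in> S\<close> is_poset_refl[OF po, of x] by auto
  ultimately obtain m where m: "m \<in> {z \<in> S. le z x}"
    and below: "\<And>y. (y, m) \<in> ?R \<Longrightarrow> y \<notin> {z \<in> S. le z x}"
    by (rule wfE_min) fast
  have "minimal_in S le m"
    unfolding minimal_in_def
  proof (intro conjI ballI impI)
    fix y assume y: "y \<in> S" "le y m"
    show "y = m"
    proof (rule ccontr)
      assume "y \<noteq> m"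
      with y m have "y \<notin> {z \<in> S. le z x}"
        using below by simp
      moreover have "le y x"
        using y m SP \<open>x \<in> S\<close> is_poset_trans[OF po, of y m x] by auto
      ultimately show False
        using y by simp
    qed
  qed (use m in simp)
  with m show thesis
    using that by simp
qed

lemma covers_converse: "covers P (\<lambda>x y. le y x) p q = covers P le q p"
  unfolding covers_def by fast

lemma hasse_edges_converse: "hasse_edges P (\<lambda>x y. le y x) = hasse_edges P le"
  unfolding hasse_edges_def covers_converse[of P le] by blast

lemma hasse_component_converse: "hasse_component P (\<lambda>x y. le y x) = hasse_component P le"
  unfolding hasse_component_def hasse_edges_converse[of P le] ..

lemma le_imp_hasse_path:
  assumes po: "is_poset P le"
  shows "p \<in> P \<Longrightarrow> q \<in> P \<Longrightarrow> le p q \<Longrightarrow> (p, q) \<in> (hasse_edges P le)\<^sup>*"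
proof (induction "card {z \<in> P. le p z \<and> le z q}" arbitrary: p rule: less_induct)
  case less
  show ?case
  proof (cases "p = q")
    case False
    let ?S = "{z \<in> P. le p z \<and> le z q \<and> z \<noteq> p}"
    obtain m where m: "minimal_in ?S le m"
      using minimal_in_below[OF po, of ?S q] less.prems False is_poset_refl[OF po] by blast
    then have mP: "m \<in> P" "le p m" "le m q" "m \<noteq> p"
      unfolding minimal_in_def by auto
    have "covers P le p m"
      using m mP less.prems is_poset_trans[OF po] unfolding covers_def minimal_in_def by blast
    then have edge: "(p, m) \<in> hasse_edges P le"
      unfolding hasse_edges_def by blast
    have "{z \<in> P. le m z \<and> le z q} \<subset> {z \<in> P. le p z \<and> le z q}"
      using mP less.prems is_poset_trans[OF po] is_poset_antisym[OF po] is_poset_refl[OF po] by blast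
    then have "card {z \<in> P. le m z \<and> le z q} < card {z \<in> P. le p z \<and> le z q}"
      using is_poset_finite[OF po] by (intro psubset_card_mono) auto
    then have "(m, q) \<in> (hasse_edges P le)\<^sup>*"
      using less.hyps mP less.prems by blast
    with edge show ?thesis by (rule converse_rtrancl_into_rtrancl)
  qed simp
qed

lemma hasse_component_eq_if_le:
  assumes po: "is_poset P le" and "p \<in> P" "q \<in> P" "le p q"
  shows "hasse_component P le p = hasse_component P le q"
proof -
  have "sym ((hasse_edges P le)\<^sup>*)"
    by (rule sym_rtrancl) (auto simp: sym_def hasse_edges_def)
  moreover have "(p, q) \<in> (hasse_edges P le)\<^sup>*"
    using le_imp_hasse_path[OF assms] .
  ultimately show ?thesis
    unfolding hasse_component_def by (blast intro: rtrancl_trans dest: symD)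
qed

lemma self_in_hasse_component: "p \<in> P \<Longrightarrow> p \<in> hasse_component P le p"
  unfolding hasse_component_def by blast

lemma hasse_component_subset: "hasse_component P le p \<subseteq> P"
  unfolding hasse_component_def by blast

lemma minimal_marked_in_component_below:
  assumes po: "is_poset P le" and "Pm \<subseteq> P" "\<forall>x. minimal_in P le x \<longrightarrow> x \<in> Pm" "p \<in> P"
  obtains a where "minimal_in (hasse_component P le p \<inter> Pm) le a" "le a p"
proof -
  obtain m where m: "minimal_in P le m" "le m p"
    using minimal_in_below[OF po order_refl \<open>p \<in> P\<close>] .
  then have "m \<in> P" "m \<in> Pm"
    using assms(3) unfolding minimal_in_def by auto
  then have "m \<in> hasse_component P le p \<inter> Pm"
    using hasse_component_eq_if_le[OF po \<open>m \<in> P\<close> \<open>p \<in> P\<close> \<open>le m p\<close>]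
      self_in_hasse_component[of m P le] by simp
  moreover have sub: "hasse_component P le p \<inter> Pm \<subseteq> P"
    using hasse_component_subset[of P le p] by blast
  ultimately obtain a where a: "minimal_in (hasse_component P le p \<inter> Pm) le a" "le a m"
    using minimal_in_below[OF po sub] by blast
  then have "a \<in> P"
    using sub unfolding minimal_in_def by blast
  with a m \<open>m \<in> P\<close> \<open>p \<in> P\<close> have "le a p"
    using is_poset_trans[OF po, of a m p] by simp
  with a that show thesis
    by blast
qed

lemma maximal_marked_in_component_above:
  assumes "is_poset P le" "Pm \<subseteq> P" "\<forall>x. maximal_in P le x \<longrightarrow> x \<in> Pm" "p \<in> P"
  obtains b where "maximal_in (hasse_component P le p \<inter> Pm) le b" "le p b"
  using minimal_marked_in_component_below[OF is_poset_converse[OF assms(1)] assms(2) _ assms(4)]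
    assms(3) that
  unfolding maximal_in_converse hasse_component_converse[of P le] by blast

lemma rescaled_box_eq_order_polytope:
  fixes \<alpha> \<delta> :: "'a \<Rightarrow> real"
  assumes \<delta>_pos: "\<And>p. p \<in> U \<Longrightarrow> \<delta> p > 0"
    and same_on_comparable:
      "\<And>p q. p \<in> U \<Longrightarrow> q \<in> U \<Longrightarrow> le p q \<Longrightarrow> \<alpha> p = \<alpha> q \<and> \<delta> p = \<delta> q"
  shows "(\<lambda>x p. if p \<in> U then (x p - \<alpha> p) / \<delta> p else 0) `
           {x. (\<forall>p. p \<notin> U \<longrightarrow> x p = 0) \<and> (\<forall>p\<in>U. \<alpha> p \<le> x p \<and> x p \<le> \<alpha> p + \<delta> p)
             \<and> (\<forall>p\<in>U. \<forall>q\<in>U. le p q \<longrightarrow> x p \<le> x q)}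
         = order_polytope U le"
  (is "?rescale ` ?box = _")
proof
  show "?rescale ` ?box \<subseteq> order_polytope U le"
  proof (rule image_subsetI)
    fix x assume x: "x \<in> ?box"
    have "(x p - \<alpha> p) / \<delta> p \<le> (x q - \<alpha> q) / \<delta> q" if "p \<in> U" "q \<in> U" "le p q" for p q
      using x that same_on_comparable[OF that] \<delta>_pos[OF \<open>p \<in> U\<close>] by (simp add: divide_right_mono)
    with x \<delta>_pos show "?rescale x \<in> order_polytope U le"
      unfolding order_polytope_def by (auto simp: pos_divide_le_eq)
  qed
next
  show "order_polytope U le \<subseteq> ?rescale ` ?box"
  proof
    fix y assume y: "y \<in> order_polytope U le"
    define x where "x p = (if p \<in> U then \<alpha> p + \<delta> p * y p else 0)" for p
    have "?rescale x = y"
      using y \<delta>_pos unfolding x_def order_polytope_def by (force simp: fun_eq_iff)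
    moreover have "x \<in> ?box"
    proof -
      have "x p \<le> x q" if "p \<in> U" "q \<in> U" "le p q" for p q
      proof (cases "p = q")
        case False
        with y that have "y p \<le> y q"
          unfolding order_polytope_def by blast
        with that show ?thesis
          using same_on_comparable[OF that] \<delta>_pos[OF \<open>p \<in> U\<close>] unfolding x_def by simp
      qed simp
      moreover have "0 \<le> \<delta> p * y p \<and> \<delta> p * y p \<le> \<delta> p" if "p \<in> U" for p
        using y that \<delta>_pos[OF that] unfolding order_polytope_def by (simp add: mult_left_le)
      ultimately show ?thesis
        using y \<delta>_pos unfolding x_def order_polytope_def by auto
    qed
    ultimately show "y \<in> ?rescale ` ?box"
      by blast
  qed
qed

lemma order_polytope_relabel:
  assumes h: "bij_betw h V U"
  shows "(\<lambda>y q. if q \<in> V then y (h q) else 0) ` order_polytope U le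
           = order_polytope V (\<lambda>i j. le (h i) (h j))"
  (is "?relabel ` _ = _")
proof
  show "?relabel ` order_polytope U le \<subseteq> order_polytope V (\<lambda>i j. le (h i) (h j))"
  proof (rule image_subsetI)
    fix y assume y: "y \<in> order_polytope U le"
    have "y (h i) \<le> y (h j)" if "i \<in> V" "j \<in> V" "le (h i) (h j)" "i \<noteq> j" for i j
    proof -
      have "h i \<in> U" "h j \<in> U" "h i \<noteq> h j"
        using that bij_betw_apply[OF h] inj_onD[OF bij_betw_imp_inj_on[OF h]] by auto
      with y \<open>le (h i) (h j)\<close> show ?thesis
        unfolding order_polytope_def by blast
    qed
    with y show "?relabel y \<in> order_polytope V (\<lambda>i j. le (h i) (h j))"
      using bij_betw_apply[OF h] unfolding order_polytope_def by auto
  qed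
next
  show "order_polytope V (\<lambda>i j. le (h i) (h j)) \<subseteq> ?relabel ` order_polytope U le"
  proof
    fix z assume z: "z \<in> order_polytope V (\<lambda>i j. le (h i) (h j))"
    define y where "y p = (if p \<in> U then z (inv_into V h p) else 0)" for p
    have inv: "inv_into V h p \<in> V" "h (inv_into V h p) = p" if "p \<in> U" for p
      using that bij_betw_apply[OF bij_betw_inv_into[OF h]] bij_betw_inv_into_right[OF h] by auto
    have "?relabel y = z"
      using z bij_betw_apply[OF h] bij_betw_inv_into_left[OF h]
      unfolding y_def order_polytope_def by (auto simp: fun_eq_iff)
    moreover have "y \<in> order_polytope U le"
    proof -
      have "y p \<le> y q" if "p \<in> U" "q \<in> U" "le p q" "p \<noteq> q" for p q
      proof -
        have "inv_into V h p \<noteq> inv_into V h q"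
          using inv that by metis
        with z inv[OF \<open>p \<in> U\<close>] inv[OF \<open>q \<in> U\<close>] \<open>le p q\<close>
        have "z (inv_into V h p) \<le> z (inv_into V h q)"
          unfolding order_polytope_def by auto
        with that show ?thesis
          unfolding y_def by simp
      qed
      then show ?thesis
        using z inv unfolding y_def order_polytope_def by auto
    qed
    ultimately show "z \<in> ?relabel ` order_polytope U le"
      by blast
  qed
qed

lemma affinely_isomorphic_rescaling:
  fixes \<alpha> \<delta> :: "'a \<Rightarrow> real"
  assumes h: "bij_betw h V U" and "finite U" and \<delta>_nonzero: "\<And>p. p \<in> U \<Longrightarrow> \<delta> p \<noteq> 0"
  shows "affinely_isomorphic U V A
           ((\<lambda>x q. if q \<in> V then (x (h q) - \<alpha> (h q)) / \<delta> (h q) else 0) ` A)"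
proof -
  define M where "M q p = (if p = h q then 1 / \<delta> p else 0)" for q p
  define N where "N p q = (if h q = p then \<delta> p else 0)" for p q
  define c where "c q = - \<alpha> (h q) / \<delta> (h q)" for q
  have hV: "h q \<in> U" if "q \<in> V" for q
    using bij_betw_apply[OF h that] .
  have "(\<Sum>p\<in>U. M q p * N p q') = (if q = q' then 1 else 0)" if "q \<in> V" "q' \<in> V" for q q'
  proof -
    have "(\<Sum>p\<in>U. M q p * N p q') = (\<Sum>p\<in>U. if p = h q then (if h q' = h q then 1 else 0) else 0)"
      using \<delta>_nonzero by (intro sum.cong) (auto simp: M_def N_def)
    also have "\<dots> = (if q = q' then 1 else 0)"
      using that hV[of q] \<open>finite U\<close> inj_onD[OF bij_betw_imp_inj_on[OF h]] by auto
    finally show ?thesis .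
  qed
  moreover have "(\<Sum>q\<in>V. N p q * M q p') = (if p = p' then 1 else 0)" if "p \<in> U" "p' \<in> U" for p p'
  proof -
    have "(\<Sum>q\<in>V. N p q * M q p')
        = (\<Sum>r\<in>U. (if r = p then \<delta> p else 0) * (if p' = r then 1 / \<delta> p' else 0))"
      unfolding M_def N_def by (rule sum.reindex_bij_betw[OF h])
    also have "\<dots> = (\<Sum>r\<in>U. if r = p then (if p = p' then 1 else 0) else 0)"
      using \<delta>_nonzero[of p] \<open>p \<in> U\<close> by (intro sum.cong) auto
    also have "\<dots> = (if p = p' then 1 else 0)"
      using \<open>p \<in> U\<close> \<open>finite U\<close> by simp
    finally show ?thesis .
  qed
  moreover have "(\<Sum>p\<in>U. M q p * x p) + c q = (x (h q) - \<alpha> (h q)) / \<delta> (h q)" if "q \<in> V" for q x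
  proof -
    have "(\<Sum>p\<in>U. M q p * x p) = (\<Sum>p\<in>U. if p = h q then x p / \<delta> p else 0)"
      unfolding M_def by (intro sum.cong) auto
    also have "\<dots> = x (h q) / \<delta> (h q)"
      using hV[OF that] \<open>finite U\<close> by simp
    finally show ?thesis
      unfolding c_def by (simp add: diff_divide_distrib)
  qed
  ultimately show ?thesis
    unfolding affinely_isomorphic_def
    by (intro exI[of _ M] exI[of _ c] conjI exI[of _ N]) (auto intro!: image_cong)
qed

locale one_min_one_max_marked =
  fixes P :: "'a set" and le :: "'a \<Rightarrow> 'a \<Rightarrow> bool" and Pm :: "'a set" and lam :: "'a \<Rightarrow> real"
  assumes marked: "marked_poset P le Pm lam"
    and components: "components_one_min_one_max_marked P le Pm"
begin

lemma poset: "is_poset P le"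
  and marked_subset: "Pm \<subseteq> P"
  and lam_mono: "x \<in> Pm \<Longrightarrow> y \<in> Pm \<Longrightarrow> le x y \<Longrightarrow> lam x \<le> lam y"
  and minimal_marked: "\<forall>x. minimal_in P le x \<longrightarrow> x \<in> Pm"
  and maximal_marked: "\<forall>x. maximal_in P le x \<longrightarrow> x \<in> Pm"
  using marked unfolding marked_poset_def by blast+

abbreviation marked_component :: "'a \<Rightarrow> 'a set" where
  "marked_component p \<equiv> hasse_component P le p \<inter> Pm"

definition bottom_mark :: "'a \<Rightarrow> 'a" where
  "bottom_mark p = (THE a. minimal_in (marked_component p) le a)"

definition top_mark :: "'a \<Rightarrow> 'a" where
  "top_mark p = (THE b. maximal_in (marked_component p) le b)"

lemma marked_component_structure:
  assumes "p \<in> P"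
  shows "\<exists>!a. minimal_in (marked_component p) le a"
    and "\<exists>!b. maximal_in (marked_component p) le b"
    and "\<forall>z\<in>marked_component p.
           minimal_in (marked_component p) le z \<or> maximal_in (marked_component p) le z"
  using components assms unfolding components_one_min_one_max_marked_def Let_def by auto

lemma minimal_in_marked_component_iff:
  assumes "p \<in> P"
  shows "minimal_in (marked_component p) le a \<longleftrightarrow> a = bottom_mark p"
  unfolding bottom_mark_def
  using theI'[OF marked_component_structure(1)[OF assms]]
    the1_equality[OF marked_component_structure(1)[OF assms]] by blast

lemma maximal_in_marked_component_iff:
  assumes "p \<in> P"
  shows "maximal_in (marked_component p) le b \<longleftrightarrow> b = top_mark p"
  unfolding top_mark_def
  using theI'[OF marked_component_structure(2)[OF assms]]
    the1_equality[OF marked_component_structure(2)[OF assms]] by blast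

lemma marked_component_cases:
  assumes "p \<in> P" "a \<in> marked_component p"
  shows "a = bottom_mark p \<or> a = top_mark p"
  using marked_component_structure(3)[OF assms(1)] assms(2)
    minimal_in_marked_component_iff[OF assms(1)] maximal_in_marked_component_iff[OF assms(1)]
  by blast

lemma bottom_mark_le:
  assumes "p \<in> P"
  shows "bottom_mark p \<in> Pm" "le (bottom_mark p) p"
proof -
  obtain a where "minimal_in (marked_component p) le a" "le a p"
    using minimal_marked_in_component_below[OF poset marked_subset minimal_marked assms] .
  with assms show "bottom_mark p \<in> Pm" "le (bottom_mark p) p"
    using minimal_in_marked_component_iff unfolding minimal_in_def by auto
qed

lemma le_top_mark:
  assumes "p \<in> P"
  shows "top_mark p \<in> Pm" "le p (top_mark p)"
proof -
  obtain b where "maximal_in (marked_component p) le b" "le p b"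
    using maximal_marked_in_component_above[OF poset marked_subset maximal_marked assms] .
  with assms show "top_mark p \<in> Pm" "le p (top_mark p)"
    using maximal_in_marked_component_iff unfolding maximal_in_def by auto
qed

lemma marks_eq_if_le:
  assumes "p \<in> P" "q \<in> P" "le p q"
  shows "bottom_mark p = bottom_mark q" "top_mark p = top_mark q"
  unfolding bottom_mark_def top_mark_def hasse_component_eq_if_le[OF poset assms] by simp_all

lemma marked_le_unmarked_eq_bottom_mark:
  assumes "a \<in> Pm" "p \<in> P - Pm" "le a p"
  shows "a = bottom_mark p"
proof -
  have "a \<in> P"
    using assms(1) marked_subset by blast
  then have "a \<in> marked_component p"
    using assms hasse_component_eq_if_le[OF poset \<open>a \<in> P\<close> _ \<open>le a p\<close>]
      self_in_hasse_component[OF \<open>a \<in> P\<close>] by auto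
  moreover have "a \<noteq> top_mark p"
  proof
    assume "a = top_mark p"
    then have "a = p"
      using assms \<open>a \<in> P\<close> le_top_mark[of p] is_poset_antisym[OF poset, of a p] by auto
    with assms show False
      by blast
  qed
  ultimately show ?thesis
    using marked_component_cases assms(2) by blast
qed

lemma unmarked_le_marked_eq_top_mark:
  assumes "b \<in> Pm" "p \<in> P - Pm" "le p b"
  shows "b = top_mark p"
proof -
  have "b \<in> P"
    using assms(1) marked_subset by blast
  then have "b \<in> marked_component p"
    using assms hasse_component_eq_if_le[OF poset _ \<open>b \<in> P\<close> \<open>le p b\<close>]
      self_in_hasse_component[OF \<open>b \<in> P\<close>] by auto
  moreover have "b \<noteq> bottom_mark p"
  proof
    assume "b = bottom_mark p"
    then have "b = p"
      using assms \<open>b \<in> P\<close> bottom_mark_le[of p] is_poset_antisym[OF poset, of p b] by auto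
    with assms show False
      by blast
  qed
  ultimately show ?thesis
    using marked_component_cases assms(2) by blast
qed

lemma marked_order_polytope_eq:
  "marked_order_polytope P le Pm lam =
     {x. (\<forall>p. p \<notin> P - Pm \<longrightarrow> x p = 0)
       \<and> (\<forall>p\<in>P - Pm. lam (bottom_mark p) \<le> x p \<and> x p \<le> lam (top_mark p))
       \<and> (\<forall>p\<in>P - Pm. \<forall>q\<in>P - Pm. le p q \<longrightarrow> x p \<le> x q)}"
  (is "_ = ?B")
proof
  show "marked_order_polytope P le Pm lam \<subseteq> ?B"
  proof
    fix x assume x: "x \<in> marked_order_polytope P le Pm lam"
    then have constraint: "\<And>p q. p \<in> P \<Longrightarrow> q \<in> P \<Longrightarrow> le p q \<Longrightarrow>
        (if p \<in> Pm then lam p else x p) \<le> (if q \<in> Pm then lam q else x q)"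
      unfolding marked_order_polytope_def by blast
    have "lam (bottom_mark p) \<le> x p \<and> x p \<le> lam (top_mark p)" if "p \<in> P - Pm" for p
    proof -
      have "bottom_mark p \<in> P" "top_mark p \<in> P"
        using that bottom_mark_le(1) le_top_mark(1) marked_subset by blast+
      then show ?thesis
        using that constraint[of "bottom_mark p" p] constraint[of p "top_mark p"]
          bottom_mark_le[of p] le_top_mark[of p] by simp
    qed
    moreover have "x p \<le> x q" if "p \<in> P - Pm" "q \<in> P - Pm" "le p q" for p q
      using that constraint[of p q] by simp
    ultimately show "x \<in> ?B"
      using x unfolding marked_order_polytope_def by auto
  qed
next
  show "?B \<subseteq> marked_order_polytope P le Pm lam"
  proof
    fix x assume x: "x \<in> ?B"
    have "(if p \<in> Pm then lam p else x p) \<le> (if q \<in> Pm then lam q else x q)"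
      if "p \<in> P" "q \<in> P" "le p q" for p q
    proof (cases "p \<in> Pm"; cases "q \<in> Pm")
      assume "p \<in> Pm" "q \<in> Pm"
      then show ?thesis
        using lam_mono \<open>le p q\<close> by simp
    next
      assume "p \<in> Pm" "q \<notin> Pm"
      then show ?thesis
        using x that marked_le_unmarked_eq_bottom_mark[of p q] by simp
    next
      assume "p \<notin> Pm" "q \<in> Pm"
      then show ?thesis
        using x that unmarked_le_marked_eq_top_mark[of q p] by simp
    next
      assume "p \<notin> Pm" "q \<notin> Pm"
      then show ?thesis
        using x that by simp
    qed
    with x show "x \<in> marked_order_polytope P le Pm lam"
      unfolding marked_order_polytope_def by auto
  qed
qed

lemma bottom_mark_lt_top_mark:
  assumes "\<forall>p\<in>P - Pm. \<forall>a\<in>Pm. \<forall>b\<in>Pm. le a p \<and> le p b \<longrightarrow> lam a < lam b"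
    and "p \<in> P - Pm"
  shows "lam (bottom_mark p) < lam (top_mark p)"
  using assms bottom_mark_le[of p] le_top_mark[of p] by blast

lemma rescaled_marked_order_polytope:
  assumes "\<forall>p\<in>P - Pm. \<forall>a\<in>Pm. \<forall>b\<in>Pm. le a p \<and> le p b \<longrightarrow> lam a < lam b"
  shows "(\<lambda>x p. if p \<in> P - Pm
                then (x p - lam (bottom_mark p)) / (lam (top_mark p) - lam (bottom_mark p)) else 0)
           ` marked_order_polytope P le Pm lam
         = order_polytope (P - Pm) le"
proof -
  have "lam (bottom_mark p) = lam (bottom_mark q) \<and> lam (top_mark p) = lam (top_mark q)"
    if "p \<in> P - Pm" "q \<in> P - Pm" "le p q" for p q
    using that marks_eq_if_le[of p q] by simp
  then show ?thesis
    using rescaled_box_eq_order_polytope[of "P - Pm" "\<lambda>p. lam (top_mark p) - lam (bottom_mark p)"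
        le "\<lambda>p. lam (bottom_mark p)"] bottom_mark_lt_top_mark[OF assms]
    unfolding marked_order_polytope_eq by simp
qed

lemma marked_order_polytope_affinely_isomorphic:
  assumes strict: "\<forall>p\<in>P - Pm. \<forall>a\<in>Pm. \<forall>b\<in>Pm. le a p \<and> le p b \<longrightarrow> lam a < lam b"
    and h: "bij_betw h V (P - Pm)"
  shows "affinely_isomorphic (P - Pm) V (marked_order_polytope P le Pm lam)
           (order_polytope V (\<lambda>i j. le (h i) (h j)))"
proof -
  let ?U = "P - Pm" and ?A = "marked_order_polytope P le Pm lam"
  let ?\<alpha> = "\<lambda>p. lam (bottom_mark p)" and ?\<delta> = "\<lambda>p. lam (top_mark p) - lam (bottom_mark p)"
  let ?f = "\<lambda>x q. if q \<in> V then (x (h q) - ?\<alpha> (h q)) / ?\<delta> (h q) else 0"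
  let ?rescale = "\<lambda>x p. if p \<in> ?U then (x p - ?\<alpha> p) / ?\<delta> p else 0"
  let ?relabel = "\<lambda>y q. if q \<in> V then y (h q) else 0"
  have "finite ?U"
    using is_poset_finite[OF poset] by blast
  have "affinely_isomorphic ?U V ?A (?f ` ?A)"
    using bottom_mark_lt_top_mark[OF strict]
    by (intro affinely_isomorphic_rescaling[OF h \<open>finite ?U\<close>]) force
  moreover have "?f = ?relabel \<circ> ?rescale"
    using bij_betw_apply[OF h] by (auto simp: fun_eq_iff)
  then have "?f ` ?A = ?relabel ` (?rescale ` ?A)"
    unfolding image_comp by (rule arg_cong)
  also have "\<dots> = ?relabel ` order_polytope ?U le"
    unfolding rescaled_marked_order_polytope[OF strict] ..
  also have "\<dots> = order_polytope V (\<lambda>i j. le (h i) (h j))"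
    by (rule order_polytope_relabel[OF h])
  finally show ?thesis .
qed

end

theorem lemma3p1:
  fixes P :: "'a set" and le :: "'a \<Rightarrow> 'a \<Rightarrow> bool"
    and Pm :: "'a set" and lam :: "'a \<Rightarrow> real"
  assumes "marked_poset P le Pm lam"
    and "components_one_min_one_max_marked P le Pm"
    and "\<forall>p\<in>P - Pm. \<forall>a\<in>Pm. \<forall>b\<in>Pm. le a p \<and> le p b \<longrightarrow> lam a < lam b"
  shows "\<exists>(Q :: nat set) leQ. is_poset Q leQ
           \<and> affinely_isomorphic (P - Pm) Q (marked_order_polytope P le Pm lam) (order_polytope Q leQ)"
proof -
  interpret one_min_one_max_marked P le Pm lam
    using assms(1,2) by unfold_locales
  have "finite (P - Pm)"
    using is_poset_finite[OF poset] by blast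
  then obtain h where h: "bij_betw h {0..<card (P - Pm)} (P - Pm)"
    using ex_bij_betw_nat_finite by blast
  have "is_poset {0..<card (P - Pm)} (\<lambda>i j. le (h i) (h j))"
    using is_poset_pullback[OF poset bij_betw_imp_inj_on[OF h]] bij_betw_imp_surj_on[OF h] by blast
  with marked_order_polytope_affinely_isomorphic[OF assms(3) h] show ?thesis
    by blast
qed

end
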